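(* Let $q$ be a prime power and $n$ a positive integer. Every sesquilinear form of $\mathbb F_{q^{2n}}/\mathbb F_{q^2}$ can be written as $\sigma_L$ for some $q^2$-linear polynomial $L$ over $\mathbb F_{q^{2n}}$. Moreover, for a $q^2$-linear polynomial $L$ over $\mathbb F_{q^{2n}}$, the following conditions are equivalent: (1) $\sigma_L$ is alternating; (2) $\sigma_L$ is the zero form; (3) $L(x)\equiv 0 \pmod{x^{q^{2n}}-x}$.
   Context: $\mathbb F_{q^{2n}}$ is regarded as an $n$-dimensional vector space over $\mathbb F_{q^2}$, and $\pi$ denotes the automorphism $x\mapsto x^q$ of $\mathbb F_{q^2}$. A sesquilinear form of $\mathbb F_{q^{2n}}/\mathbb F_{q^2}$ is a map $\sigma:\mathbb F_{q^{2n}}\times\mathbb F_{q^{2n}}\to\mathbb F_{q^2}$ such that for each fixed $v$, $\sigma(\cdot,v)$ is $\mathbb F_{q^2}$-linear and $\sigma(v,\cdot)$ is additive with $\sigma(v,cw)=c^q\sigma(v,w)$ for $c\in\mathbb F_{q^2}$. It is alternating if $\sigma(v,v)=0$ for all $v$. A $q^2$-linear polynomial over $\mathbb F_{q^{2n}}$ is a polynomial $\sum_i a_ix^{q^{2i}}$ with $a_i\in\mathbb F_{q^{2n}}$. $\mathrm{Tr}$ denotes the trace map $\mathbb F_{q^{2n}}\to\mathbb F_{q^2}$, and $\sigma_L(u,v)=\mathrm{Tr}(uL(v^q))$ for $u,v\in\mathbb F_{q^{2n}}$. *)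

theory Defs
  imports "HOL-Computational_Algebra.Polynomial"
begin

text \<open>The ambient field F_{q^{2n}} is a finite field type 'a with CARD('a) = q^(2n).
  The subfield F_{q^2} is the set of elements fixed by x \<mapsto> x^(q^2).\<close>

definition subF :: "nat \<Rightarrow> 'a::{finite,field} set" where
  "subF q = {x. x ^ (q^2) = x}"

definition trF :: "nat \<Rightarrow> nat \<Rightarrow> 'a::{finite,field} \<Rightarrow> 'a" where
  "trF q n x = (\<Sum>i<n. x ^ (q ^ (2*i)))"

definition sesquilinear :: "nat \<Rightarrow> ('a::{finite,field} \<Rightarrow> 'a \<Rightarrow> 'a) \<Rightarrow> bool" where
  "sesquilinear q \<sigma> \<longleftrightarrow>
     (\<forall>u v. \<sigma> u v \<in> subF q) \<and>
     (\<forall>u u' v. \<sigma> (u + u') v = \<sigma> u v + \<sigma> u' v) \<and>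
     (\<forall>c\<in>subF q. \<forall>u v. \<sigma> (c * u) v = c * \<sigma> u v) \<and>
     (\<forall>u v v'. \<sigma> u (v + v') = \<sigma> u v + \<sigma> u v') \<and>
     (\<forall>c\<in>subF q. \<forall>u v. \<sigma> u (c * v) = c ^ q * \<sigma> u v)"

definition alternating :: "('a \<Rightarrow> 'a \<Rightarrow> 'b::zero) \<Rightarrow> bool" where
  "alternating \<sigma> \<longleftrightarrow> (\<forall>v. \<sigma> v v = 0)"

definition q2_linear :: "nat \<Rightarrow> 'a::{finite,field} poly \<Rightarrow> bool" where
  "q2_linear q L \<longleftrightarrow> (\<forall>k. coeff L k \<noteq> 0 \<longrightarrow> (\<exists>i. k = q ^ (2*i)))"

definition sigmaL :: "nat \<Rightarrow> nat \<Rightarrow> 'a::{finite,field} poly \<Rightarrow> 'a \<Rightarrow> 'a \<Rightarrow> 'a" where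
  "sigmaL q n L u v = trF q n (u * poly L (v ^ q))"

end

theory Submission
  imports Defs "HOL-Library.FuncSet"
begin

(*
  sigma_L vanishes identically iff L vanishes as a function on F_{q^2n}, because x |-> x^q is
  bijective and the trace is not identically zero; this is the case iff X^{q^2n} - X divides L.
  Hence the (q^2n)^n polynomials sum_{i<n} c_i X^{q^2i}, which have degree < q^2n, give pairwise
  distinct forms sigma_L, all of them sesquilinear. Conversely, F_{q^2n} has a basis of n vectors
  over F_{q^2}, and a sesquilinear form is determined by its n^2 values on pairs of basis vectors,
  which lie in F_{q^2}; so there are at most (q^2)^(n^2) = (q^2n)^n sesquilinear forms, and every
  one of them is some sigma_L.
  An alternating sesquilinear form is skew, so for c in F_{q^2} with c^q ~= c (which exists as
  F_{q^2} has q^2 > q elements), c sigma(u,v) = sigma(cu,v) = - sigma(v,cu) = - c^q sigma(v,u) = c^q sigma(u,v) forces sigma = 0.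
*)

section \<open>Polynomials over finite fields\<close>

lemma power_card_UNIV_eq_self:
  fixes x :: "'a::{finite,field}"
  shows "x ^ card (UNIV :: 'a set) = x"
proof (cases "x = 0")
  case False
  let ?U = "UNIV - {0::'a}"
  have "(\<Prod>y\<in>?U. y) = (\<Prod>y\<in>?U. x * y)"
    by (rule prod.reindex_bij_witness[of _ "\<lambda>y. x * y" "\<lambda>y. y / x"]) (use False in auto)
  also have "\<dots> = x ^ card ?U * (\<Prod>y\<in>?U. y)"
    by (simp add: prod.distrib)
  finally have "x ^ card ?U = 1"
    by simp
  moreover have "card (UNIV :: 'a set) = Suc (card ?U)"
    by (simp add: card_Diff_singleton finite_UNIV_card_ge_0)
  ultimately show ?thesis
    by (simp only: power_Suc mult_1_right)
qed (simp add: finite_UNIV_card_ge_0)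

lemma of_nat_card_UNIV_eq_0: "of_nat (card (UNIV :: 'a::{finite,ring_1} set)) = (0::'a)"
proof -
  have "(\<Sum>x\<in>UNIV. x + 1) = (\<Sum>x\<in>UNIV. x :: 'a)"
    by (rule sum.reindex_bij_witness[of _ "\<lambda>x. x - 1" "\<lambda>x. x + 1"]) auto
  then show ?thesis
    by (simp add: sum.distrib)
qed

lemma two_le_card_UNIV: "2 \<le> card (UNIV :: 'a::{finite,field} set)"
  using card_mono[of UNIV "{0::'a, 1}"] by simp

lemma CHAR_eq_if_card_eq_prime_power:
  assumes "prime p" and "card (UNIV :: 'a::{finite,field} set) = p ^ m"
  shows "CHAR('a) = p"
proof -
  have "prime CHAR('a)"
    by (intro prime_CHAR_semidom finite_imp_CHAR_pos) simp
  moreover have "CHAR('a) dvd p ^ m"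
    using of_nat_card_UNIV_eq_0[where 'a = 'a] assms(2) by (simp only: of_nat_eq_0_iff_char_dvd)
  ultimately have "CHAR('a) dvd p"
    by (rule prime_dvd_power)
  with \<open>prime CHAR('a)\<close> assms(1) show ?thesis
    by (rule primes_dvd_imp_eq)
qed

lemma power_minus_self_dvd_power_power_minus_self:
  fixes x :: "'a::comm_ring_1"
  shows "(x ^ m - x) dvd (x ^ (m ^ j) - x)"
proof (induction j)
  case (Suc j)
  have "(x ^ (m ^ j) - x) dvd ((x ^ (m ^ j)) ^ m - x ^ m)"
    unfolding power_diff_sumr2 by (rule dvd_triv_left)
  with Suc.IH have "(x ^ m - x) dvd ((x ^ (m ^ j)) ^ m - x ^ m)"
    by (rule dvd_trans)
  then have "(x ^ m - x) dvd ((x ^ (m ^ j)) ^ m - x ^ m) + (x ^ m - x)"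
    by (rule dvd_add) (rule dvd_refl)
  moreover have "x ^ (m ^ Suc j) = (x ^ (m ^ j)) ^ m"
    by (simp only: power_Suc2 power_mult)
  ultimately show ?case
    by simp
qed simp

lemma degree_monom_minus_X:
  assumes "m \<ge> 2"
  shows "degree (monom (1::'a::comm_ring_1) m - monom 1 1) = m"
proof -
  have "degree (monom 1 m + - monom (1::'a) 1) = m"
    using assms by (subst degree_add_eq_left) (simp_all add: degree_monom_eq)
  then show ?thesis
    by simp
qed

lemma monom_minus_X_neq_0:
  assumes "m \<ge> 2"
  shows "monom (1::'a::comm_ring_1) m - monom 1 1 \<noteq> 0"
proof -
  have "degree (monom (1::'a) m - monom 1 1) \<noteq> 0"
    using degree_monom_minus_X[where 'a='a, OF assms] assms by linarith
  then show ?thesis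
    by auto
qed

lemma card_roots_mult_le:
  fixes g h :: "'a::{finite,idom} poly"
  assumes "h \<noteq> 0"
  shows "card {x. poly (g * h) x = 0} \<le> card {x. poly g x = 0} + degree h"
proof -
  have "card {x. poly (g * h) x = 0} \<le> card ({x. poly g x = 0} \<union> {x. poly h x = 0})"
    by (intro card_mono) auto
  also have "\<dots> \<le> card {x. poly g x = 0} + card {x. poly h x = 0}"
    by (rule card_Un_le)
  finally show ?thesis
    using card_poly_roots_bound[OF assms] by linarith
qed

lemma poly_eq_0_if_vanishing:
  fixes p :: "'a::{finite,idom} poly"
  assumes "\<And>x. poly p x = 0" and "degree p < card (UNIV :: 'a set)"
  shows "p = 0"
proof (rule ccontr)
  assume "p \<noteq> 0"
  with card_poly_roots_bound[of p] assms show False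
    by simp
qed

lemma poly_monom_card_UNIV_minus_X:
  "poly (monom 1 (card (UNIV :: 'a set)) - monom 1 1) (x::'a::{finite,field}) = 0"
  by (simp add: poly_monom power_card_UNIV_eq_self)

lemma vanishing_iff_dvd:
  fixes p :: "'a::{finite,field} poly"
  shows "(\<forall>x. poly p x = 0) \<longleftrightarrow> (monom 1 (card (UNIV :: 'a set)) - monom 1 1) dvd p"
    (is "_ \<longleftrightarrow> ?P dvd p")
proof
  assume "\<forall>x. poly p x = 0"
  then have "poly (p mod ?P) x = 0" for x
    using poly_monom_card_UNIV_minus_X[of x] by (simp flip: minus_div_mult_eq_mod)
  moreover have "degree (p mod ?P) < card (UNIV :: 'a set)"
  proof (cases "p mod ?P = 0")
    case False
    have card_ge_2: "2 \<le> card (UNIV :: 'a set)"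
      by (rule two_le_card_UNIV)
    from False show ?thesis
      using degree_mod_less'[OF monom_minus_X_neq_0[where 'a='a, OF card_ge_2]]
        degree_monom_minus_X[where 'a='a, OF card_ge_2] by simp
  qed (use two_le_card_UNIV[where 'a='a] in simp)
  ultimately show "?P dvd p"
    unfolding dvd_eq_mod_eq_0 by (rule poly_eq_0_if_vanishing)
next
  assume "?P dvd p"
  then obtain r where r: "p = ?P * r"
    by (rule dvdE)
  show "\<forall>x. poly p x = 0"
    unfolding r poly_mult poly_monom_card_UNIV_minus_X by simp
qed

lemma card_roots_eq_degree_if_dvd:
  fixes p :: "'a::{finite,field} poly"
  assumes "p dvd monom 1 (card (UNIV :: 'a set)) - monom 1 1"
  shows "card {x. poly p x = 0} = degree p"
proof -
  let ?P = "monom 1 (card (UNIV :: 'a set)) - monom (1::'a) 1"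
  obtain h where h: "?P = p * h"
    using assms by (rule dvdE)
  have card_ge_2: "2 \<le> card (UNIV :: 'a set)"
    by (rule two_le_card_UNIV)
  have "p * h \<noteq> 0"
    unfolding h[symmetric] by (rule monom_minus_X_neq_0[OF card_ge_2])
  then have "p \<noteq> 0" and "h \<noteq> 0"
    by auto
  have "card (UNIV :: 'a set) = card {x. poly (p * h) x = 0}"
    using poly_monom_card_UNIV_minus_X[where 'a='a] by (simp flip: h)
  also have "\<dots> \<le> card {x. poly p x = 0} + degree h"
    by (rule card_roots_mult_le[OF \<open>h \<noteq> 0\<close>])
  finally have "card (UNIV :: 'a set) \<le> card {x. poly p x = 0} + degree h" .
  moreover have "degree p + degree h = card (UNIV :: 'a set)"
    using degree_monom_minus_X[where 'a='a, OF card_ge_2]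
    by (simp only: h degree_mult_eq[OF \<open>p \<noteq> 0\<close> \<open>h \<noteq> 0\<close>])
  ultimately have "degree p \<le> card {x. poly p x = 0}"
    by linarith
  with card_poly_roots_bound[OF \<open>p \<noteq> 0\<close>] show ?thesis
    by simp
qed

section \<open>Subfield, trace and q2-linear polynomials\<close>

lemma subF_power_q2_power:
  assumes "c \<in> subF q"
  shows "(c::'a::{finite,field}) ^ (q ^ (2*i)) = c"
proof (induction i)
  case (Suc i)
  have "c ^ (q ^ (2 * Suc i)) = (c ^ (q ^ (2*i))) ^ (q ^ 2)"
    by (simp add: power_mult[symmetric] power_add[symmetric])
  with Suc.IH assms show ?case
    by (simp add: subF_def)
qed simp

lemma subF_divide: "a \<in> subF q \<Longrightarrow> b \<in> subF q \<Longrightarrow> (a::'a::{finite,field}) / b \<in> subF q"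
  by (simp add: subF_def power_divide)

lemma subF_power_q:
  assumes "c \<in> subF q"
  shows "(c::'a::{finite,field}) ^ q \<in> subF q"
proof -
  have "(c ^ q) ^ (q ^ 2) = (c ^ (q ^ 2)) ^ q"
    by (simp flip: power_mult add: mult.commute)
  with assms show ?thesis
    by (simp add: subF_def)
qed

lemma trF_mult_subF:
  assumes "c \<in> subF q"
  shows "trF q n ((c::'a::{finite,field}) * x) = c * trF q n x"
  using assms by (simp add: trF_def power_mult_distrib subF_power_q2_power sum_distrib_left)

definition q2_linear_poly :: "nat \<Rightarrow> nat \<Rightarrow> (nat \<Rightarrow> 'a::comm_semiring_1) \<Rightarrow> 'a poly" where
  "q2_linear_poly q n c = (\<Sum>i<n. monom (c i) (q ^ (2*i)))"

lemma coeff_q2_linear_poly: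
  "coeff (q2_linear_poly q n c) m = (\<Sum>i<n. if q ^ (2*i) = m then c i else 0)"
  by (simp add: q2_linear_poly_def coeff_sum)

lemma q2_linear_q2_linear_poly: "q2_linear q (q2_linear_poly q n c)"
  unfolding q2_linear_def coeff_q2_linear_poly
proof (intro allI impI)
  fix m
  assume "(\<Sum>i<n. if q ^ (2*i) = m then c i else 0) \<noteq> 0"
  then obtain i where "(if q ^ (2*i) = m then c i else 0) \<noteq> 0"
    using sum.not_neutral_contains_not_neutral by blast
  then show "\<exists>i. m = q ^ (2*i)"
    by (auto split: if_splits)
qed

lemma poly_q2_linear_mult_subF:
  fixes L :: "'a::{finite,field} poly"
  assumes "q2_linear q L" and "c \<in> subF q"
  shows "poly L (c * x) = c * poly L x"
proof -
  have monomial: "coeff L i * (c * x) ^ i = c * (coeff L i * x ^ i)" for i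
    using assms subF_power_q2_power[OF assms(2)]
    by (cases "coeff L i = 0") (auto simp: q2_linear_def power_mult_distrib)
  show ?thesis
    unfolding poly_altdef sum_distrib_left by (intro sum.cong refl monomial)
qed

lemma trF_eq_poly_q2_linear_poly: "trF q n x = poly (q2_linear_poly q n (\<lambda>_. 1)) x"
  by (simp add: trF_def q2_linear_poly_def poly_sum poly_monom)

lemma inj_on_lincomb_extend:
  fixes K :: "'a::field set" and e :: "nat \<Rightarrow> 'a"
  assumes diff_closed: "\<And>a b. a \<in> K \<Longrightarrow> b \<in> K \<Longrightarrow> a - b \<in> K"
    and divide_closed: "\<And>a b. a \<in> K \<Longrightarrow> b \<in> K \<Longrightarrow> a / b \<in> K"
    and inj: "inj_on (\<lambda>c. \<Sum>i<m. c i * e i) (PiE {..<m} (\<lambda>_. K))"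
    and x: "x \<notin> (\<lambda>c. \<Sum>i<m. c i * e i) ` PiE {..<m} (\<lambda>_. K)"
  shows "inj_on (\<lambda>c. \<Sum>i<Suc m. c i * (e(m := x)) i) (PiE {..<Suc m} (\<lambda>_. K))"
proof (rule inj_onI)
  fix c d :: "nat \<Rightarrow> 'a"
  assume c: "c \<in> PiE {..<Suc m} (\<lambda>_. K)" and d: "d \<in> PiE {..<Suc m} (\<lambda>_. K)"
    and eq: "(\<Sum>i<Suc m. c i * (e(m := x)) i) = (\<Sum>i<Suc m. d i * (e(m := x)) i)"
  have sum_Suc: "(\<Sum>i<Suc m. f i * (e(m := x)) i) = (\<Sum>i<m. f i * e i) + f m * x" for f
    by simp
  have cK: "c i \<in> K" if "i \<le> m" for i
    using that PiE_mem[OF c] by simp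
  have dK: "d i \<in> K" if "i \<le> m" for i
    using that PiE_mem[OF d] by simp
  have top: "c m = d m"
  proof (rule ccontr)
    assume ne: "c m \<noteq> d m"
    define a where "a = restrict (\<lambda>i. (d i - c i) / (c m - d m)) {..<m}"
    have a_mem: "a \<in> PiE {..<m} (\<lambda>_. K)"
      by (auto simp: a_def intro!: divide_closed diff_closed cK dK)
    have "(c m - d m) * x = (\<Sum>i<m. (d i - c i) * e i)"
      using eq by (simp add: sum_Suc algebra_simps sum_subtractf)
    then have "x = (\<Sum>i<m. (d i - c i) * e i) / (c m - d m)"
      using ne by (simp add: eq_divide_eq mult.commute)
    also have "\<dots> = (\<Sum>i<m. a i * e i)"
      unfolding a_def sum_divide_distrib by (intro sum.cong) auto
    finally show False
      using x a_mem by blast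
  qed
  with eq have "(\<Sum>i<m. restrict c {..<m} i * e i) = (\<Sum>i<m. restrict d {..<m} i * e i)"
    by (simp add: sum_Suc)
  moreover have "restrict c {..<m} \<in> PiE {..<m} (\<lambda>_. K)" "restrict d {..<m} \<in> PiE {..<m} (\<lambda>_. K)"
    unfolding restrict_PiE_iff using cK dK by simp_all
  ultimately have "restrict c {..<m} = restrict d {..<m}"
    by (rule inj_onD[OF inj])
  with top show "c = d"
    by (intro PiE_ext[OF c d]) (metis less_Suc_eq lessThan_iff restrict_apply')
qed

section \<open>Sesquilinear forms\<close>

lemma sesquilinear_add_left: "sesquilinear q \<sigma> \<Longrightarrow> \<sigma> (u + u') v = \<sigma> u v + \<sigma> u' v"
  by (simp add: sesquilinear_def)

lemma sesquilinear_add_right: "sesquilinear q \<sigma> \<Longrightarrow> \<sigma> u (v + v') = \<sigma> u v + \<sigma> u v'"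
  by (simp add: sesquilinear_def)

lemma sesquilinear_mult_left: "sesquilinear q \<sigma> \<Longrightarrow> c \<in> subF q \<Longrightarrow> \<sigma> (c * u) v = c * \<sigma> u v"
  by (simp add: sesquilinear_def)

lemma sesquilinear_mult_right:
  "sesquilinear q \<sigma> \<Longrightarrow> c \<in> subF q \<Longrightarrow> \<sigma> u (c * v) = c ^ q * \<sigma> u v"
  by (simp add: sesquilinear_def)

lemma sesquilinear_zero_left: "sesquilinear q \<sigma> \<Longrightarrow> \<sigma> 0 v = 0"
  using sesquilinear_add_left[of q \<sigma> 0 0 v] by (simp only: add_0_left add_cancel_right_right)

lemma sesquilinear_zero_right: "sesquilinear q \<sigma> \<Longrightarrow> \<sigma> u 0 = 0"
  using sesquilinear_add_right[of q \<sigma> u 0 0] by (simp only: add_0_left add_cancel_right_right)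

lemma sesquilinear_sum_left:
  "sesquilinear q \<sigma> \<Longrightarrow> \<sigma> (\<Sum>i\<in>A. f i) v = (\<Sum>i\<in>A. \<sigma> (f i) v)"
  by (induction A rule: infinite_finite_induct)
    (simp_all add: sesquilinear_zero_left sesquilinear_add_left)

lemma sesquilinear_sum_right:
  "sesquilinear q \<sigma> \<Longrightarrow> \<sigma> u (\<Sum>i\<in>A. f i) = (\<Sum>i\<in>A. \<sigma> u (f i))"
  by (induction A rule: infinite_finite_induct)
    (simp_all add: sesquilinear_zero_right sesquilinear_add_right)

lemma sesquilinear_sum_mult:
  assumes "sesquilinear q \<sigma>" and "\<forall>i\<in>A. c i \<in> subF q" and "\<forall>j\<in>B. d j \<in> subF q"
  shows "\<sigma> (\<Sum>i\<in>A. c i * u i) (\<Sum>j\<in>B. d j * w j) = (\<Sum>i\<in>A. \<Sum>j\<in>B. c i * d j ^ q * \<sigma> (u i) (w j))"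
  using assms
  by (auto simp: sesquilinear_sum_left sesquilinear_sum_right sesquilinear_mult_left
      sesquilinear_mult_right sum_distrib_left mult.assoc intro!: sum.cong)

lemma sesquilinear_eqI_on_spanning:
  assumes \<sigma>: "sesquilinear q \<sigma>" and \<tau>: "sesquilinear q \<tau>"
    and spanning: "\<And>x. \<exists>c. (\<forall>i\<in>A. c i \<in> subF q) \<and> x = (\<Sum>i\<in>A. c i * e i)"
    and on_basis: "\<And>i j. i \<in> A \<Longrightarrow> j \<in> A \<Longrightarrow> \<sigma> (e i) (e j) = \<tau> (e i) (e j)"
  shows "\<sigma> = \<tau>"
proof (intro ext)
  fix x y
  obtain c d where c: "\<forall>i\<in>A. c i \<in> subF q" "x = (\<Sum>i\<in>A. c i * e i)"
    and d: "\<forall>j\<in>A. d j \<in> subF q" "y = (\<Sum>j\<in>A. d j * e j)"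
    using spanning by meson
  have "\<sigma> x y = (\<Sum>i\<in>A. \<Sum>j\<in>A. c i * d j ^ q * \<sigma> (e i) (e j))"
    unfolding c(2) d(2) by (rule sesquilinear_sum_mult[OF \<sigma> c(1) d(1)])
  also have "\<dots> = (\<Sum>i\<in>A. \<Sum>j\<in>A. c i * d j ^ q * \<tau> (e i) (e j))"
    by (intro sum.cong refl) (simp only: on_basis)
  also have "\<dots> = \<tau> x y"
    unfolding c(2) d(2) by (rule sesquilinear_sum_mult[OF \<tau> c(1) d(1), symmetric])
  finally show "\<sigma> x y = \<tau> x y" .
qed

lemma alternating_sesquilinear_eq_0:
  fixes \<sigma> :: "'a::{finite,field} \<Rightarrow> 'a \<Rightarrow> 'a" and c :: 'a
  assumes \<sigma>: "sesquilinear q \<sigma>" and "alternating \<sigma>"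
    and c: "c \<in> subF q" "c ^ q \<noteq> c"
  shows "\<sigma> = (\<lambda>u v. 0)"
proof (intro ext)
  fix u v
  have skew: "\<sigma> y x = - \<sigma> x y" for x y
  proof -
    have "\<sigma> (x + y) (x + y) = \<sigma> x x + \<sigma> y x + (\<sigma> x y + \<sigma> y y)"
      by (simp only: sesquilinear_add_left[OF \<sigma>] sesquilinear_add_right[OF \<sigma>])
    then have "\<sigma> y x + \<sigma> x y = 0"
      using \<open>alternating \<sigma>\<close> by (simp add: alternating_def)
    then show ?thesis
      by (simp add: eq_neg_iff_add_eq_0)
  qed
  have "c * \<sigma> u v = \<sigma> (c * u) v"
    by (rule sesquilinear_mult_left[OF \<sigma> c(1), symmetric])
  also have "\<dots> = - \<sigma> v (c * u)"
    by (rule skew)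
  also have "\<sigma> v (c * u) = c ^ q * \<sigma> v u"
    by (rule sesquilinear_mult_right[OF \<sigma> c(1)])
  also have "\<sigma> v u = - \<sigma> u v"
    by (rule skew)
  finally have "(c - c ^ q) * \<sigma> u v = 0"
    by (simp add: algebra_simps)
  with c(2) show "\<sigma> u v = 0"
    by simp
qed

section \<open>The forms sigma_L\<close>

context
  fixes q n k :: nat
  assumes q_eq_CHAR_power: "q = CHAR('a::{finite,field}) ^ k"
    and n_pos: "n > 0"
    and card_UNIV_eq: "card (UNIV :: 'a set) = q ^ (2*n)"
begin

lemma q_ge_2: "q \<ge> 2"
proof (rule ccontr)
  assume "\<not> q \<ge> 2"
  then have "q = 0 \<or> q = 1"
    by linarith
  then have "q ^ (2*n) \<le> 1"
    using n_pos by (auto simp: power_0_left)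
  with two_le_card_UNIV[where 'a='a] show False
    by (simp add: card_UNIV_eq)
qed

lemma power_q_power_add: "((x::'a) + y) ^ (q ^ j) = x ^ (q ^ j) + y ^ (q ^ j)"
  by (rule freshmans_dream'[of _ "k*j"])
    (simp_all add: q_eq_CHAR_power power_mult prime_CHAR_semidom finite_imp_CHAR_pos)

lemma power_q_power_sum: "(\<Sum>i\<in>A. f i :: 'a) ^ (q ^ j) = (\<Sum>i\<in>A. f i ^ (q ^ j))"
  by (rule freshmans_dream_sum'[of _ "k*j"])
    (simp_all add: q_eq_CHAR_power power_mult prime_CHAR_semidom finite_imp_CHAR_pos)

lemma power_q_power_diff: "((x::'a) - y) ^ (q ^ j) = x ^ (q ^ j) - y ^ (q ^ j)"
  using power_q_power_add[of "x - y" y j] by (simp add: algebra_simps)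

lemma power_q_power_2n: "(x::'a) ^ (q ^ (2*n)) = x"
  using power_card_UNIV_eq_self[of x] by (simp add: card_UNIV_eq)

lemma subF_diff: "a \<in> subF q \<Longrightarrow> b \<in> subF q \<Longrightarrow> (a::'a) - b \<in> subF q"
  using power_q_power_diff[of a b 2] by (simp add: subF_def)

lemma card_subF: "card (subF q :: 'a set) = q ^ 2"
proof -
  have "subF q = {x. poly (monom 1 (q ^ 2) - monom 1 1) x = (0::'a)}"
    by (simp add: subF_def poly_monom)
  moreover have "monom 1 (q ^ 2) - monom 1 1 dvd monom 1 (card (UNIV :: 'a set)) - monom (1::'a) 1"
    using power_minus_self_dvd_power_power_minus_self[of "monom (1::'a) 1" "q ^ 2" n]
    by (simp add: monom_power card_UNIV_eq power_mult)
  moreover have "q ^ 2 \<ge> 2"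
    using q_ge_2 power_increasing[of 1 2 q] by simp
  ultimately show ?thesis
    using card_roots_eq_degree_if_dvd degree_monom_minus_X by metis
qed

lemma coeff_q2_linear_poly_q_power:
  assumes "j < n"
  shows "coeff (q2_linear_poly q n c) (q ^ (2*j)) = (c j :: 'a)"
proof -
  have "coeff (q2_linear_poly q n c) (q ^ (2*j)) = (\<Sum>i<n. if i = j then c i else 0)"
    unfolding coeff_q2_linear_poly
    using q_ge_2 by (intro sum.cong) simp_all
  with assms show ?thesis
    by simp
qed

lemma degree_q2_linear_poly_less: "degree (q2_linear_poly q n (c :: nat \<Rightarrow> 'a)) < q ^ (2*n)"
proof -
  have "degree (q2_linear_poly q n c) \<le> q ^ (2*(n-1))"
    unfolding q2_linear_poly_def
  proof (rule degree_sum_le)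
    fix i assume "i \<in> {..<n}"
    then have "q ^ (2*i) \<le> q ^ (2*(n-1))"
      using q_ge_2 by (intro power_increasing) auto
    then show "degree (monom (c i) (q ^ (2*i))) \<le> q ^ (2*(n-1))"
      using degree_monom_le order_trans by blast
  qed simp
  also have "\<dots> < q ^ (2*n)"
    using q_ge_2 n_pos by (intro power_strict_increasing) auto
  finally show ?thesis .
qed

lemma exists_subF_power_q_neq: "\<exists>c\<in>subF q. (c::'a) ^ q \<noteq> c"
proof (rule ccontr)
  assume "\<not> ?thesis"
  then have "subF q \<subseteq> {x. poly (monom 1 q - monom 1 1) x = (0::'a)}"
    by (auto simp: poly_monom)
  then have "card (subF q :: 'a set) \<le> card {x. poly (monom 1 q - monom 1 1) x = (0::'a)}"
    by (intro card_mono) simp_all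
  also have "\<dots> \<le> q"
    using card_poly_roots_bound[OF monom_minus_X_neq_0[where 'a='a, OF q_ge_2]]
      degree_monom_minus_X[where 'a='a, OF q_ge_2] by simp
  finally have "card (subF q :: 'a set) \<le> q" .
  with card_subF q_ge_2 show False
    by (simp add: power2_eq_square)
qed

lemma trF_add: "trF q n ((x::'a) + y) = trF q n x + trF q n y"
  by (simp add: trF_def power_q_power_add sum.distrib)

lemma trF_diff: "trF q n ((x::'a) - y) = trF q n x - trF q n y"
  by (simp add: trF_def power_q_power_diff sum_subtractf)

lemma trF_in_subF: "trF q n (x::'a) \<in> subF q"
proof -
  have "trF q n x ^ (q ^ 2) = (\<Sum>i<n. x ^ (q ^ (2 * Suc i)))"
    unfolding trF_def power_q_power_sum
    by (intro sum.cong refl) (simp flip: power_mult power_add)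
  also have "\<dots> = trF q n x"
    using sum.lessThan_Suc_shift[of "\<lambda>i. x ^ (q ^ (2*i))" n]
    by (simp add: trF_def power_q_power_2n)
  finally show ?thesis
    by (simp add: subF_def)
qed

lemma exists_trF_neq_0: "\<exists>a::'a. trF q n a \<noteq> 0"
proof (rule ccontr)
  let ?T = "q2_linear_poly q n (\<lambda>_. 1::'a)"
  assume "\<not> ?thesis"
  then have "?T = 0"
    by (intro poly_eq_0_if_vanishing) (simp_all add: card_UNIV_eq degree_q2_linear_poly_less
        flip: trF_eq_poly_q2_linear_poly)
  moreover have "coeff ?T (q ^ (2*0)) = 1"
    using n_pos by (rule coeff_q2_linear_poly_q_power)
  ultimately show False
    by simp
qed

lemma poly_q2_linear_add:
  fixes L :: "'a poly"
  assumes "q2_linear q L"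
  shows "poly L (x + y) = poly L x + poly L y"
proof -
  have monomial: "coeff L i * (x + y) ^ i = coeff L i * x ^ i + coeff L i * y ^ i" for i
    using assms by (cases "coeff L i = 0") (auto simp: q2_linear_def power_q_power_add distrib_left)
  show ?thesis
    unfolding poly_altdef sum.distrib[symmetric] by (intro sum.cong refl monomial)
qed

lemma sesquilinear_sigmaL:
  fixes L :: "'a poly"
  assumes L: "q2_linear q L"
  shows "sesquilinear q (sigmaL q n L)"
  unfolding sesquilinear_def
proof (intro conjI allI ballI)
  fix u v v' :: 'a
  have "(v + v') ^ q = v ^ q + v' ^ q"
    using power_q_power_add[of v v' 1] by simp
  then show "sigmaL q n L u (v + v') = sigmaL q n L u v + sigmaL q n L u v'"
    by (simp add: sigmaL_def poly_q2_linear_add[OF L] distrib_left trF_add)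
next
  fix c u v :: 'a
  assume c: "c \<in> subF q"
  have "u * poly L ((c * v) ^ q) = c ^ q * (u * poly L (v ^ q))"
    by (simp add: power_mult_distrib poly_q2_linear_mult_subF[OF L subF_power_q[OF c]] ac_simps)
  then show "sigmaL q n L u (c * v) = c ^ q * sigmaL q n L u v"
    unfolding sigmaL_def by (simp only: trF_mult_subF[OF subF_power_q[OF c]])
  show "sigmaL q n L (c * u) v = c * sigmaL q n L u v"
    using c by (simp add: sigmaL_def mult.assoc trF_mult_subF)
qed (simp_all add: sigmaL_def trF_in_subF distrib_right trF_add)

lemma sigmaL_diff: "sigmaL q n (L - M) u v = sigmaL q n L u v - sigmaL q n M u (v::'a)"
  by (simp add: sigmaL_def right_diff_distrib trF_diff)

lemma sigmaL_eq_0_iff_vanishing: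
  "sigmaL q n L = (\<lambda>u v. 0) \<longleftrightarrow> (\<forall>x::'a. poly L x = 0)"
proof
  assume "\<forall>x. poly L x = 0"
  then show "sigmaL q n L = (\<lambda>u v. 0)"
    using q_ge_2 by (intro ext) (simp add: sigmaL_def trF_def power_0_left)
next
  assume sigma_0: "sigmaL q n L = (\<lambda>u v. 0)"
  show "\<forall>x. poly L x = 0"
  proof
    fix w :: 'a
    obtain a :: 'a where a: "trF q n a \<noteq> 0"
      using exists_trF_neq_0 by blast
    define v where "v = w ^ (q ^ (2*n - 1))"
    have "v ^ q = w ^ (q ^ (2*n - 1) * q)"
      by (simp add: v_def power_mult)
    also have "q ^ (2*n - 1) * q = q ^ (2*n)"
      using n_pos by (simp flip: power_Suc2)
    finally have "v ^ q = w"
      by (simp add: power_q_power_2n)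
    then have "sigmaL q n L (a / poly L w) v = trF q n a" if "poly L w \<noteq> 0"
      using that by (simp add: sigmaL_def)
    with sigma_0 a show "poly L w = 0"
      by auto
  qed
qed

lemma card_PiE_subF: "card (PiE {..<m} (\<lambda>_. subF q :: 'a set)) = q ^ (2*m)"
  by (simp add: card_PiE card_subF power_mult)

lemma exists_subF_basis:
  "\<exists>e :: nat \<Rightarrow> 'a. bij_betw (\<lambda>c. \<Sum>i<n. c i * e i) (PiE {..<n} (\<lambda>_. subF q)) UNIV"
proof -
  have "\<exists>e :: nat \<Rightarrow> 'a. inj_on (\<lambda>c. \<Sum>i<m. c i * e i) (PiE {..<m} (\<lambda>_. subF q))" if "m \<le> n" for m
    using that
  proof (induction m)
    case 0
    show ?case
      by (simp add: inj_on_def)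
  next
    case (Suc m)
    then obtain e :: "nat \<Rightarrow> 'a"
      where inj: "inj_on (\<lambda>c. \<Sum>i<m. c i * e i) (PiE {..<m} (\<lambda>_. subF q))"
      by auto
    have "card ((\<lambda>c. \<Sum>i<m. c i * e i) ` PiE {..<m} (\<lambda>_. subF q)) = q ^ (2*m)"
      using card_image[OF inj] card_PiE_subF by simp
    also have "\<dots> < card (UNIV :: 'a set)"
      using Suc.prems q_ge_2 by (simp add: card_UNIV_eq power_strict_increasing)
    finally have "(\<lambda>c. \<Sum>i<m. c i * e i) ` PiE {..<m} (\<lambda>_. subF q) \<noteq> UNIV"
      by auto
    then obtain x where "x \<notin> (\<lambda>c. \<Sum>i<m. c i * e i) ` PiE {..<m} (\<lambda>_. subF q)"
      by blast
    from inj_on_lincomb_extend[OF subF_diff subF_divide inj this] show ?case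
      by blast
  qed
  then obtain e :: "nat \<Rightarrow> 'a" where inj: "inj_on (\<lambda>c. \<Sum>i<n. c i * e i) (PiE {..<n} (\<lambda>_. subF q))"
    by blast
  moreover have "card ((\<lambda>c. \<Sum>i<n. c i * e i) ` PiE {..<n} (\<lambda>_. subF q)) = card (UNIV :: 'a set)"
    by (simp only: card_image[OF inj] card_PiE_subF card_UNIV_eq)
  then have "(\<lambda>c. \<Sum>i<n. c i * e i) ` PiE {..<n} (\<lambda>_. subF q) = UNIV"
    by (intro card_eq_UNIV_imp_eq_UNIV) simp_all
  ultimately show ?thesis
    unfolding bij_betw_def by blast
qed

lemma card_sesquilinear_le: "card {\<sigma> :: 'a \<Rightarrow> 'a \<Rightarrow> 'a. sesquilinear q \<sigma>} \<le> (q ^ (2*n)) ^ n"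
proof -
  let ?S = "{\<sigma> :: 'a \<Rightarrow> 'a \<Rightarrow> 'a. sesquilinear q \<sigma>}"
  obtain e :: "nat \<Rightarrow> 'a" where e: "bij_betw (\<lambda>c. \<Sum>i<n. c i * e i) (PiE {..<n} (\<lambda>_. subF q)) UNIV"
    using exists_subF_basis by blast
  have spanning: "\<exists>c. (\<forall>i\<in>{..<n}. c i \<in> subF q) \<and> x = (\<Sum>i<n. c i * e i)" for x
  proof -
    have "x \<in> (\<lambda>c. \<Sum>i<n. c i * e i) ` PiE {..<n} (\<lambda>_. subF q)"
      using e by (simp add: bij_betw_def)
    then show ?thesis
      by auto
  qed
  define I where "I = {..<n} \<times> {..<n}"
  define gram where "gram \<sigma> = restrict (\<lambda>(i, j). \<sigma> (e i) (e j)) I" for \<sigma> :: "'a \<Rightarrow> 'a \<Rightarrow> 'a"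
  have "inj_on gram ?S"
  proof (rule inj_onI)
    fix \<sigma> \<tau>
    assume "\<sigma> \<in> ?S" "\<tau> \<in> ?S" and gram_eq: "gram \<sigma> = gram \<tau>"
    have "\<sigma> (e i) (e j) = \<tau> (e i) (e j)" if "i \<in> {..<n}" "j \<in> {..<n}" for i j
      using that fun_cong[OF gram_eq, of "(i, j)"] by (simp add: gram_def I_def)
    with \<open>\<sigma> \<in> ?S\<close> \<open>\<tau> \<in> ?S\<close> show "\<sigma> = \<tau>"
      by (intro sesquilinear_eqI_on_spanning[OF _ _ spanning]) simp_all
  qed
  then have "card ?S = card (gram ` ?S)"
    by (simp add: card_image)
  also have "\<dots> \<le> card (PiE I (\<lambda>_. subF q :: 'a set))"
  proof (intro card_mono image_subsetI)
    show "gram \<sigma> \<in> PiE I (\<lambda>_. subF q)" if "\<sigma> \<in> ?S" for \<sigma>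
      unfolding gram_def restrict_PiE_iff using that by (auto simp: sesquilinear_def)
  qed (simp add: I_def finite_PiE)
  also have "\<dots> = (q ^ (2*n)) ^ n"
    by (simp add: I_def card_PiE card_subF power_mult)
  finally show ?thesis .
qed

lemma inj_on_sigmaL_q2_linear_poly:
  "inj_on (\<lambda>c. sigmaL q n (q2_linear_poly q n c)) (PiE {..<n} (\<lambda>_. UNIV :: 'a set))"
proof (rule inj_onI)
  fix c d :: "nat \<Rightarrow> 'a"
  assume c: "c \<in> PiE {..<n} (\<lambda>_. UNIV)" and d: "d \<in> PiE {..<n} (\<lambda>_. UNIV)"
    and eq: "sigmaL q n (q2_linear_poly q n c) = sigmaL q n (q2_linear_poly q n d)"
  have "sigmaL q n (q2_linear_poly q n c - q2_linear_poly q n d) = (\<lambda>u v. 0)"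
    by (intro ext) (simp add: sigmaL_diff eq)
  then have "q2_linear_poly q n c - q2_linear_poly q n d = 0"
    by (intro poly_eq_0_if_vanishing)
      (simp_all add: sigmaL_eq_0_iff_vanishing card_UNIV_eq degree_diff_less degree_q2_linear_poly_less)
  then have "c j = d j" if "j < n" for j
    using coeff_q2_linear_poly_q_power[OF that, of c] coeff_q2_linear_poly_q_power[OF that, of d]
    by simp
  then show "c = d"
    using c d by (intro PiE_ext[OF c d]) simp
qed

lemma sesquilinear_eq_sigmaL:
  assumes "sesquilinear q (\<sigma> :: 'a \<Rightarrow> 'a \<Rightarrow> 'a)"
  shows "\<exists>L. q2_linear q L \<and> \<sigma> = sigmaL q n L"
proof -
  let ?S = "{\<sigma> :: 'a \<Rightarrow> 'a \<Rightarrow> 'a. sesquilinear q \<sigma>}"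
  let ?forms = "(\<lambda>c. sigmaL q n (q2_linear_poly q n c)) ` PiE {..<n} (\<lambda>_. UNIV :: 'a set)"
  have "?forms \<subseteq> ?S"
    by (auto intro: sesquilinear_sigmaL q2_linear_q2_linear_poly)
  moreover have "card ?forms = (q ^ (2*n)) ^ n"
    using card_image[OF inj_on_sigmaL_q2_linear_poly] by (simp add: card_PiE card_UNIV_eq)
  ultimately have "?forms = ?S"
    using card_sesquilinear_le by (intro card_seteq) simp_all
  with assms q2_linear_q2_linear_poly show ?thesis
    by blast
qed

lemma alternating_sigmaL_iff:
  assumes "q2_linear q L"
  shows "alternating (sigmaL q n L) \<longleftrightarrow> sigmaL q n L = (\<lambda>u (v::'a). 0)"
  using alternating_sesquilinear_eq_0[OF sesquilinear_sigmaL[OF assms]] exists_subF_power_q_neq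
  by (auto simp: alternating_def)

lemma sigmaL_eq_0_iff_dvd:
  "sigmaL q n L = (\<lambda>u (v::'a). 0) \<longleftrightarrow> (monom 1 (q ^ (2*n)) - monom 1 1) dvd L"
  using vanishing_iff_dvd[of L] by (simp add: sigmaL_eq_0_iff_vanishing card_UNIV_eq)

end

theorem theorem2p1:
  fixes q n :: nat
  assumes "\<exists>p k. prime p \<and> k > 0 \<and> q = p ^ k"
    and "n > 0"
    and "card (UNIV :: 'a::{finite,field} set) = q ^ (2*n)"
  shows "(\<forall>\<sigma> :: 'a \<Rightarrow> 'a \<Rightarrow> 'a. sesquilinear q \<sigma> \<longrightarrow>
            (\<exists>L. q2_linear q L \<and> \<sigma> = sigmaL q n L))
       \<and> (\<forall>L :: 'a poly. q2_linear q L \<longrightarrow>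
            ((alternating (sigmaL q n L) \<longleftrightarrow> sigmaL q n L = (\<lambda>u v. 0)) \<and>
             (sigmaL q n L = (\<lambda>u v. 0) \<longleftrightarrow> (monom 1 (q ^ (2*n)) - monom 1 1) dvd L)))"
proof -
  obtain p k where p: "prime p" and q: "q = p ^ k"
    using assms(1) by blast
  have "card (UNIV :: 'a set) = p ^ (k * (2*n))"
    using assms(3) by (simp add: q power_mult)
  then have "CHAR('a) = p"
    by (rule CHAR_eq_if_card_eq_prime_power[OF p])
  then have q_eq: "q = CHAR('a) ^ k"
    by (simp add: q)
  note field_facts = q_eq assms(2) assms(3)
  show ?thesis
    using sesquilinear_eq_sigmaL[OF field_facts] alternating_sigmaL_iff[OF field_facts]
      sigmaL_eq_0_iff_dvd[OF field_facts]
    by blast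
qed

end
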